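(* Consider a fixed-size experiment measuring a binary observable $P$ (single-shot outcomes in $\{-1,+1\}$) with ideal expectation $\langle P\rangle_0=1$. Fix a Richardson rule of order $k\ge1$ with scale factors $1=\lambda_0<\cdots<\lambda_k$, coefficients $c_j$ with $\sum_jc_j=1$, $\sum_jc_j\lambda_j^m=0$ ($m=1,\ldots,k$), allocation fractions $\pi_j>0$, $\sum_j\pi_j=1$, independent samples across scales. Suppose that for each $j$ \[ \mu(\lambda_j\epsilon)=\langle P\rangle_{\lambda_j\epsilon}=(1-\gamma\lambda_j\epsilon)^{\ell_n}+O_n(\epsilon^2),\qquad\gamma>0, \] where $\ell_n$ is a fixed positive integer. Let $\kappa_n=\gamma\ell_n$. Then, with $D(\epsilon)=\mathrm{Bias}_{\mathrm{noisy}}(\epsilon)^2-\mathrm{Bias}_{\mathrm{ZNE}}(\epsilon)^2$ and $A_k(\epsilon)=\sum_jc_j^2v(\lambda_j\epsilon)/\pi_j-v(\epsilon)$, \[ D(\epsilon)=\kappa_n^2\epsilon^2+O_n(\epsilon^3),\qquad v_n(\epsilon)=2\kappa_n\epsilon+O_n(\epsilon^2),\qquad A_k(\epsilon)=K_{1,k,n}\epsilon+O_n(\epsilon^2), \] with \[ K_{1,k,n}=2\kappa_n\left[\sum_j\frac{c_j^2\lambda_j}{\pi_j}-1\right]; \] that is, the leading MSE balance $\Delta_{\mathrm{MSE}}(\epsilon,B)=D(\epsilon)-A_k(\epsilon)/B$ holds with $p=1$, $q=1$, $D_{1,n}=\kappa_n^2$, $\nu_n=2\kappa_n$. The lower local help-harm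 boundary satisfies \[ \epsilon^*_n(B)\sim\frac{2}{\kappa_n}\left[\sum_j\frac{c_j^2\lambda_j}{\pi_j}-1\right]B^{-1}\qquad(B\to\infty). \]
   Context: $\mu(\epsilon)$ is the noisy expectation of $P$, $v_n(\epsilon)=1-\mu(\epsilon)^2$ its single-shot variance. With total shot budget $B$, the unmitigated estimator is the mean of $B$ shots at noise $\epsilon$ and $\widehat\mu_{\mathrm{ZNE}}=\sum_jc_j\widehat\mu(\lambda_j\epsilon)$ with $\widehat\mu(\lambda_j\epsilon)$ the mean of $\pi_jB$ shots at noise $\lambda_j\epsilon$. $\mathrm{Bias}_{\mathrm{noisy}}=\mu(\epsilon)-\langle P\rangle_0$, $\mathrm{Bias}_{\mathrm{ZNE}}=\mathbb E[\widehat\mu_{\mathrm{ZNE}}]-\langle P\rangle_0$, and $\Delta_{\mathrm{MSE}}=\mathrm{MSE}_{\mathrm{noisy}}-\mathrm{MSE}_{\mathrm{ZNE}}$ with $\mathrm{MSE}=\mathbb E[(\widehat\mu-\langle P\rangle_0)^2]$. The lower local help-harm boundary $\epsilon^*_n(B)$ is the first positive small-noise zero of $\Delta_{\mathrm{MSE}}(\cdot,B)$ where it changes from negative to positive; $\sim$ means ratio tends to $1$. *)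

theory Defs
  imports "HOL-Analysis.Analysis" "HOL-Library.Landau_Symbols"
begin

text \<open>Ideal expectation is fixed to 1. mu is the noisy expectation as a function
of the noise level; the Richardson rule is given by scale factors lam j, coefficients
c j and allocation fractions pr j, for j = 0..k.\<close>

definition single_shot_var :: "(real \<Rightarrow> real) \<Rightarrow> real \<Rightarrow> real" where
  "single_shot_var mu \<epsilon> = 1 - (mu \<epsilon>)^2"

definition bias_noisy :: "(real \<Rightarrow> real) \<Rightarrow> real \<Rightarrow> real" where
  "bias_noisy mu \<epsilon> = mu \<epsilon> - 1"

definition bias_zne :: "nat \<Rightarrow> (nat \<Rightarrow> real) \<Rightarrow> (nat \<Rightarrow> real) \<Rightarrow> (real \<Rightarrow> real) \<Rightarrow> real \<Rightarrow> real" where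
  "bias_zne k c lam mu \<epsilon> = (\<Sum>j\<le>k. c j * mu (lam j * \<epsilon>)) - 1"

definition mse_noisy :: "(real \<Rightarrow> real) \<Rightarrow> real \<Rightarrow> real \<Rightarrow> real" where
  "mse_noisy mu \<epsilon> B = (bias_noisy mu \<epsilon>)^2 + single_shot_var mu \<epsilon> / B"

text \<open>MSE of the ZNE estimator with independent means of pr j * B shots at noise lam j * eps.\<close>
definition mse_zne :: "nat \<Rightarrow> (nat \<Rightarrow> real) \<Rightarrow> (nat \<Rightarrow> real) \<Rightarrow> (nat \<Rightarrow> real) \<Rightarrow> (real \<Rightarrow> real) \<Rightarrow> real \<Rightarrow> real \<Rightarrow> real" where
  "mse_zne k c lam pr mu \<epsilon> B = (bias_zne k c lam mu \<epsilon>)^2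
     + (\<Sum>j\<le>k. (c j)^2 * single_shot_var mu (lam j * \<epsilon>) / (pr j * B))"

definition delta_mse :: "nat \<Rightarrow> (nat \<Rightarrow> real) \<Rightarrow> (nat \<Rightarrow> real) \<Rightarrow> (nat \<Rightarrow> real) \<Rightarrow> (real \<Rightarrow> real) \<Rightarrow> real \<Rightarrow> real \<Rightarrow> real" where
  "delta_mse k c lam pr mu \<epsilon> B = mse_noisy mu \<epsilon> B - mse_zne k c lam pr mu \<epsilon> B"

definition var_excess :: "nat \<Rightarrow> (nat \<Rightarrow> real) \<Rightarrow> (nat \<Rightarrow> real) \<Rightarrow> (nat \<Rightarrow> real) \<Rightarrow> (real \<Rightarrow> real) \<Rightarrow> real \<Rightarrow> real" where
  "var_excess k c lam pr mu \<epsilon> =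
     (\<Sum>j\<le>k. (c j)^2 * single_shot_var mu (lam j * \<epsilon>) / pr j) - single_shot_var mu \<epsilon>"

definition lower_boundary :: "(real \<Rightarrow> real) \<Rightarrow> real \<Rightarrow> bool" where
  "lower_boundary \<Delta> e \<longleftrightarrow> 0 < e \<and> \<Delta> e = 0 \<and> (\<forall>x\<in>{0<..<e}. \<Delta> x < 0)
     \<and> (\<exists>\<delta>>0. \<forall>x\<in>{e<..<e+\<delta>}. 0 < \<Delta> x)"

end

theory Submission
  imports Defs "HOL-Real_Asymp.Real_Asymp"
begin

text \<open>
Write \<kappa> = \<gamma> ell. The power model gives mu(lam j \<epsilon>) = 1 - \<kappa> lam j \<epsilon> + O(\<epsilon>^2). The Richardson
conditions sum c j = 1 and sum c j lam j = 0 cancel the linear term, so the extrapolated bias is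
O(\<epsilon>^2) while the noisy bias is -\<kappa> \<epsilon> + O(\<epsilon>^2); hence D(\<epsilon>) = \<kappa>^2 \<epsilon>^2 + O(\<epsilon>^3). Likewise
1 - mu(lam \<epsilon>)^2 = 2 \<kappa> lam \<epsilon> + O(\<epsilon>^2), so A(\<epsilon>) = K \<epsilon> + O(\<epsilon>^2) with K = 2 \<kappa> (S - 1) and
S = sum (c j)^2 lam j / pr j. Here S > 1: sum (c j)^2 / pr j \<ge> (sum c j)^2 / sum pr j = 1, and
lam j > 1 for j > 0, where some c j must be nonzero.

The boundary is governed by t D(x) - x A(x), which near 0 has the sign of t \<kappa>^2 - K. So for
t \<kappa>^2 < K the difference D(x) - A(x)/B is negative on (0, t/B], while for t \<kappa>^2 > K it is
positive at t/B; hence B e(B) tends to K / \<kappa>^2.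
\<close>

lemma power_bigo_power_at_right_0:
  assumes "n \<le> m"
  shows "(\<lambda>x::real. x ^ m) \<in> O[at_right 0](\<lambda>x. x ^ n)"
proof (rule bigoI[where c = 1])
  have "eventually (\<lambda>x::real. x \<in> {0<..<1}) (at_right 0)"
    by (rule eventually_at_right_real) simp
  then show "eventually (\<lambda>x::real. norm (x ^ m) \<le> 1 * norm (x ^ n)) (at_right 0)"
    by eventually_elim (use assms in \<open>auto simp: norm_power intro: power_decreasing\<close>)
qed

lemma bigo_power_mult:
  assumes "f \<in> O[F](\<lambda>x. x ^ m)" and "g \<in> O[F](\<lambda>x. x ^ n)"
  shows "(\<lambda>x. f x * g x) \<in> O[F](\<lambda>x::real. x ^ (m + n))"
  using landau_o.big.mult[OF assms] by (simp add: power_add)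

lemma tendsto_quotient_power_of_bigo:
  assumes "(\<lambda>x. f x - c * x ^ n) \<in> O[at_right 0](\<lambda>x::real. x ^ (n + 1))"
  shows "((\<lambda>x. f x / x ^ n) \<longlongrightarrow> c) (at_right 0)"
proof -
  have "(\<lambda>x::real. x * x ^ n) \<in> o[at_right 0](\<lambda>x. 1 * x ^ n)"
    by (rule landau_o.small_big_mult) (real_asymp, simp)
  with assms have "(\<lambda>x. f x - c * x ^ n) \<in> o[at_right 0](\<lambda>x. x ^ n)"
    by (simp add: landau_o.big_small_trans)
  then have "((\<lambda>x. (f x - c * x ^ n) / x ^ n + c) \<longlongrightarrow> 0 + c) (at_right 0)"
    by (intro tendsto_add smalloD_tendsto tendsto_const)
  moreover have "eventually (\<lambda>x. (f x - c * x ^ n) / x ^ n + c = f x / x ^ n) (at_right 0)"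
    using eventually_at_right_less[of 0] by eventually_elim (simp add: field_simps)
  ultimately show ?thesis
    by (simp add: tendsto_cong)
qed

lemma power_one_minus_linear_bigo:
  "(\<lambda>x::real. (1 - a * x) ^ n - (1 - real n * a * x)) \<in> O[at_right 0](\<lambda>x. x\<^sup>2)"
proof (induction n)
  case 0
  then show ?case by simp
next
  case (Suc n)
  have "(\<lambda>x::real. 1 - a * x) \<in> O[at_right 0](\<lambda>_. 1)" by real_asymp
  from landau_o.big.mult[OF this Suc.IH]
  have "(\<lambda>x. (1 - a * x) * ((1 - a * x) ^ n - (1 - real n * a * x)) + real n * a\<^sup>2 * x\<^sup>2)
      \<in> O[at_right 0](\<lambda>x. x\<^sup>2)"
    by (intro sum_in_bigo) simp_all
  moreover have "(\<lambda>x. (1 - a * x) * ((1 - a * x) ^ n - (1 - real n * a * x)) + real n * a\<^sup>2 * x\<^sup>2)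
      = (\<lambda>x. (1 - a * x) ^ Suc n - (1 - real (Suc n) * a * x))"
    by (auto simp: fun_eq_iff algebra_simps power2_eq_square)
  ultimately show ?case by simp
qed

lemma square_difference_bigo:
  assumes f: "(\<lambda>x. f x + \<kappa> * x) \<in> O[at_right 0](\<lambda>x. x\<^sup>2)"
    and g: "g \<in> O[at_right 0](\<lambda>x. x\<^sup>2)"
  shows "(\<lambda>x. (f x)\<^sup>2 - (g x)\<^sup>2 - \<kappa>\<^sup>2 * x\<^sup>2) \<in> O[at_right 0](\<lambda>x::real. x ^ 3)"
proof -
  have "(\<lambda>x. f x + \<kappa> * x) \<in> O[at_right 0](\<lambda>x. x ^ 1)"
    using landau_o.big_trans[OF f power_bigo_power_at_right_0[of 1 2]] by simp
  then have "(\<lambda>x. f x + \<kappa> * x - 2 * \<kappa> * x) \<in> O[at_right 0](\<lambda>x. x ^ 1)"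
    by (rule sum_in_bigo(2)) simp
  from bigo_power_mult[OF f this]
  have "(\<lambda>x. (f x + \<kappa> * x) * (f x + \<kappa> * x - 2 * \<kappa> * x)) \<in> O[at_right 0](\<lambda>x. x ^ 3)"
    by simp
  moreover have "(\<lambda>x. g x * g x) \<in> O[at_right 0](\<lambda>x. x ^ 3)"
    using landau_o.big_trans[OF bigo_power_mult[OF g g] power_bigo_power_at_right_0[of 3 "2 + 2"]]
    by simp
  ultimately have "(\<lambda>x. (f x + \<kappa> * x) * (f x + \<kappa> * x - 2 * \<kappa> * x) - g x * g x)
      \<in> O[at_right 0](\<lambda>x. x ^ 3)"
    by (rule sum_in_bigo(2))
  then show ?thesis
    by (simp add: algebra_simps power2_eq_square)
qed

lemma one_minus_square_bigo:
  assumes f: "(\<lambda>x. f x - (1 - a * x)) \<in> O[at_right 0](\<lambda>x. x\<^sup>2)"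
  shows "(\<lambda>x. 1 - (f x)\<^sup>2 - 2 * a * x) \<in> O[at_right 0](\<lambda>x::real. x\<^sup>2)"
proof -
  have "(\<lambda>x. f x - (1 - a * x)) \<in> O[at_right 0](\<lambda>x. x ^ 1)"
    using landau_o.big_trans[OF f power_bigo_power_at_right_0[of 1 2]] by simp
  then have "(\<lambda>x. f x - (1 - a * x) - a * x) \<in> O[at_right 0](\<lambda>x. x ^ 1)"
    by (rule sum_in_bigo(2)) simp
  from bigo_power_mult[OF this this]
  have "(\<lambda>x. (f x - (1 - a * x) - a * x) * (f x - (1 - a * x) - a * x)) \<in> O[at_right 0](\<lambda>x. x\<^sup>2)"
    unfolding one_add_one .
  moreover have "(\<lambda>x. - 2 * (f x - (1 - a * x))) \<in> O[at_right 0](\<lambda>x. x\<^sup>2)"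
    using f by (simp only: cmult_in_bigo_iff simp_thms)
  ultimately have "(\<lambda>x. - 2 * (f x - (1 - a * x))
      - (f x - (1 - a * x) - a * x) * (f x - (1 - a * x) - a * x)) \<in> O[at_right 0](\<lambda>x. x\<^sup>2)"
    by (intro sum_in_bigo(2))
  then show ?thesis
    by (simp add: algebra_simps power2_eq_square)
qed

lemma bias_zne_bigo:
  assumes "(\<Sum>j\<le>k. c j) = 1" and "(\<Sum>j\<le>k. c j * lam j) = 0"
    and "\<And>j. j \<le> k \<Longrightarrow>
      (\<lambda>\<epsilon>. mu (lam j * \<epsilon>) - (1 - \<kappa> * lam j * \<epsilon>)) \<in> O[at_right 0](\<lambda>\<epsilon>. \<epsilon>\<^sup>2)"
  shows "bias_zne k c lam mu \<in> O[at_right 0](\<lambda>\<epsilon>. \<epsilon>\<^sup>2)"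
proof -
  have "bias_zne k c lam mu \<epsilon> = (\<Sum>j\<le>k. c j * (mu (lam j * \<epsilon>) - (1 - \<kappa> * lam j * \<epsilon>)))" for \<epsilon>
  proof -
    have "(\<Sum>j\<le>k. c j * (1 - \<kappa> * lam j * \<epsilon>)) = (\<Sum>j\<le>k. c j) - \<kappa> * \<epsilon> * (\<Sum>j\<le>k. c j * lam j)"
      by (simp add: algebra_simps sum_subtractf sum_distrib_left)
    then show ?thesis
      using assms(1,2) by (simp add: bias_zne_def right_diff_distrib sum_subtractf)
  qed
  then have "bias_zne k c lam mu = (\<lambda>\<epsilon>. \<Sum>j\<le>k. c j * (mu (lam j * \<epsilon>) - (1 - \<kappa> * lam j * \<epsilon>)))"
    by blast
  also have "\<dots> \<in> O[at_right 0](\<lambda>\<epsilon>. \<epsilon>\<^sup>2)"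
    using assms(3) by (intro big_sum_in_bigo) simp
  finally show ?thesis .
qed

lemma var_excess_bigo:
  assumes "lam 0 = 1"
    and "\<And>j. j \<le> k \<Longrightarrow>
      (\<lambda>\<epsilon>. single_shot_var mu (lam j * \<epsilon>) - 2 * \<kappa> * lam j * \<epsilon>) \<in> O[at_right 0](\<lambda>\<epsilon>. \<epsilon>\<^sup>2)"
  shows "(\<lambda>\<epsilon>. var_excess k c lam pr mu \<epsilon> - 2 * \<kappa> * ((\<Sum>j\<le>k. (c j)\<^sup>2 * lam j / pr j) - 1) * \<epsilon>)
    \<in> O[at_right 0](\<lambda>\<epsilon>. \<epsilon>\<^sup>2)"
proof -
  define W where "W j \<epsilon> = single_shot_var mu (lam j * \<epsilon>) - 2 * \<kappa> * lam j * \<epsilon>" for j \<epsilon>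
  have "var_excess k c lam pr mu \<epsilon> - 2 * \<kappa> * ((\<Sum>j\<le>k. (c j)\<^sup>2 * lam j / pr j) - 1) * \<epsilon>
      = (\<Sum>j\<le>k. (c j)\<^sup>2 / pr j * W j \<epsilon>) - W 0 \<epsilon>" for \<epsilon>
    using assms(1)
    by (simp add: var_excess_def W_def algebra_simps sum_subtractf sum_distrib_left sum.distrib)
  moreover have "W j \<in> O[at_right 0](\<lambda>\<epsilon>. \<epsilon>\<^sup>2)" if "j \<le> k" for j
    using assms(2)[OF that] by (simp add: W_def[abs_def])
  then have "(\<lambda>\<epsilon>. (\<Sum>j\<le>k. (c j)\<^sup>2 / pr j * W j \<epsilon>) - W 0 \<epsilon>) \<in> O[at_right 0](\<lambda>\<epsilon>. \<epsilon>\<^sup>2)"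
    by (intro sum_in_bigo(2) big_sum_in_bigo) (auto simp only: cmult_in_bigo_iff atMost_iff)
  ultimately show ?thesis by simp
qed

lemma delta_mse_eq:
  "delta_mse k c lam pr mu \<epsilon> B
     = ((bias_noisy mu \<epsilon>)\<^sup>2 - (bias_zne k c lam mu \<epsilon>)\<^sup>2) - var_excess k c lam pr mu \<epsilon> / B"
  by (simp add: delta_mse_def mse_noisy_def mse_zne_def var_excess_def sum_divide_distrib
      diff_divide_distrib)

lemma sum_square_div_ge_one:
  fixes c p :: "'a \<Rightarrow> real"
  assumes "finite A" and "\<And>j. j \<in> A \<Longrightarrow> p j > 0"
    and "(\<Sum>j\<in>A. c j) = 1" and "(\<Sum>j\<in>A. p j) = 1"
  shows "(\<Sum>j\<in>A. (c j)\<^sup>2 / p j) \<ge> 1"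
proof -
  have "p j * (c j / p j - 1)\<^sup>2 = (c j)\<^sup>2 / p j - 2 * c j + p j" if "j \<in> A" for j
    using assms(2)[OF that] by (simp add: field_simps power2_eq_square)
  then have "(\<Sum>j\<in>A. p j * (c j / p j - 1)\<^sup>2) = (\<Sum>j\<in>A. (c j)\<^sup>2 / p j - 2 * c j + p j)"
    by (rule sum.cong[OF refl])
  also have "\<dots> = (\<Sum>j\<in>A. (c j)\<^sup>2 / p j) - 1"
    using assms(3,4) by (simp add: sum.distrib sum_subtractf sum_distrib_left[symmetric])
  finally show ?thesis
    using sum_nonneg[of A "\<lambda>j. p j * (c j / p j - 1)\<^sup>2"] assms(2) by (simp add: less_imp_le)
qed

lemma richardson_variance_factor_gt_one:
  fixes c lam pr :: "nat \<Rightarrow> real"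
  assumes lam0: "lam 0 = 1" and lam_mono: "\<And>i j. i < j \<Longrightarrow> j \<le> k \<Longrightarrow> lam i < lam j"
    and c_sum: "(\<Sum>j\<le>k. c j) = 1" and c_moment: "(\<Sum>j\<le>k. c j * lam j) = 0"
    and pr_pos: "\<And>j. j \<le> k \<Longrightarrow> pr j > 0" and pr_sum: "(\<Sum>j\<le>k. pr j) = 1"
  shows "(\<Sum>j\<le>k. (c j)\<^sup>2 * lam j / pr j) > 1"
proof -
  have lam_ge: "lam j \<ge> 1" if "j \<le> k" for j
    using lam_mono[of 0 j] that lam0 by (cases "j = 0") auto
  have "\<exists>i. 0 < i \<and> i \<le> k \<and> c i \<noteq> 0"
  proof (rule ccontr)
    assume "\<nexists>i. 0 < i \<and> i \<le> k \<and> c i \<noteq> 0"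
    then have "c j * lam j = c j" if "j \<le> k" for j
      using that lam0 by (cases "j = 0") auto
    then have "(\<Sum>j\<le>k. c j * lam j) = (\<Sum>j\<le>k. c j)"
      by (intro sum.cong) auto
    then show False
      using c_sum c_moment by simp
  qed
  then obtain i where i: "0 < i" "i \<le> k" "c i \<noteq> 0" by blast
  have "(\<Sum>j\<le>k. (c j)\<^sup>2 * (lam j - 1) / pr j) > 0"
  proof (rule sum_pos2)
    show "i \<in> {..k}" "0 < (c i)\<^sup>2 * (lam i - 1) / pr i"
      using i lam_mono[of 0 i] lam0 pr_pos[of i] by auto
    show "0 \<le> (c j)\<^sup>2 * (lam j - 1) / pr j" if "j \<in> {..k}" for j
      using that lam_ge[of j] pr_pos[of j] by simp
  qed simp
  moreover have "(\<Sum>j\<le>k. (c j)\<^sup>2 / pr j) \<ge> 1"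
    using pr_pos c_sum pr_sum by (intro sum_square_div_ge_one) auto
  moreover have "(\<Sum>j\<le>k. (c j)\<^sup>2 * lam j / pr j)
      = (\<Sum>j\<le>k. (c j)\<^sup>2 / pr j) + (\<Sum>j\<le>k. (c j)\<^sup>2 * (lam j - 1) / pr j)"
    unfolding sum.distrib[symmetric] add_divide_distrib[symmetric] by (simp add: algebra_simps)
  ultimately show ?thesis by linarith
qed

lemma scaled_quotient_difference_eq:
  fixes x :: real
  assumes "x \<noteq> 0"
  shows "x\<^sup>2 * (t * (D / x\<^sup>2) - A / x) = t * D - x * A"
  using assms by (simp add: field_simps power2_eq_square)

lemma lower_boundary_scaled_eventually_gt:
  fixes D A :: "real \<Rightarrow> real" and e :: "nat \<Rightarrow> real"
  assumes D: "((\<lambda>x. D x / x\<^sup>2) \<longlongrightarrow> d) (at_right 0)" and A: "((\<lambda>x. A x / x) \<longlongrightarrow> K) (at_right 0)"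
    and "K > 0" and "t > 0" and "t * d < K"
    and e: "\<forall>\<^sub>F B in at_top. lower_boundary (\<lambda>x. D x - A x / real B) (e B)"
  shows "\<forall>\<^sub>F B in at_top. t < e B * real B"
proof -
  have "((\<lambda>x. t * (D x / x\<^sup>2) - A x / x) \<longlongrightarrow> t * d - K) (at_right 0)"
    using D A by (intro tendsto_intros)
  then have "\<forall>\<^sub>F x in at_right 0. t * (D x / x\<^sup>2) - A x / x < 0"
    by (rule order_tendstoD(2)) (use \<open>t * d < K\<close> in linarith)
  moreover have "\<forall>\<^sub>F x in at_right 0. 0 < A x / x"
    using A \<open>K > 0\<close> by (rule order_tendstoD(1))
  ultimately have "\<forall>\<^sub>F x in at_right 0. t * D x < x * A x \<and> 0 < A x"
    using eventually_at_right_less[of 0]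
  proof eventually_elim
    case (elim x)
    then have "t * D x - x * A x = x\<^sup>2 * (t * (D x / x\<^sup>2) - A x / x)"
      by (intro scaled_quotient_difference_eq[symmetric]) auto
    also have "\<dots> < 0"
      using elim by (intro mult_pos_neg) auto
    finally show ?case
      using elim by (simp add: zero_less_divide_iff)
  qed
  then obtain \<delta> where "\<delta> > 0" and near: "\<And>x. 0 < x \<Longrightarrow> x < \<delta> \<Longrightarrow> t * D x < x * A x \<and> 0 < A x"
    unfolding eventually_at_right_field by auto
  have "\<forall>\<^sub>F B in at_top. t / real B < \<delta>"
    using \<open>\<delta> > 0\<close> by real_asymp
  with e eventually_gt_at_top[of 0] show ?thesis
  proof eventually_elim
    case (elim B)
    then have "0 < e B" and zero: "D (e B) - A (e B) / real B = 0"
      by (auto simp: lower_boundary_def)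
    show "t < e B * real B"
    proof (rule ccontr)
      assume "\<not> t < e B * real B"
      then have le: "e B \<le> t / real B"
        using elim by (simp add: pos_le_divide_eq)
      with elim near[OF \<open>0 < e B\<close>] have "t * D (e B) < e B * A (e B)" and "0 < A (e B)"
        by auto
      then have "t * (D (e B) - A (e B) / real B) < A (e B) * (e B - t / real B)"
        by (simp add: algebra_simps)
      also have "\<dots> \<le> 0"
        using le \<open>0 < A (e B)\<close> by (simp add: mult_nonneg_nonpos)
      finally show False
        using zero by simp
    qed
  qed
qed

lemma lower_boundary_scaled_eventually_lt:
  fixes D A :: "real \<Rightarrow> real" and e :: "nat \<Rightarrow> real"
  assumes D: "((\<lambda>x. D x / x\<^sup>2) \<longlongrightarrow> d) (at_right 0)" and A: "((\<lambda>x. A x / x) \<longlongrightarrow> K) (at_right 0)"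
    and "t > 0" and "K < t * d"
    and e: "\<forall>\<^sub>F B in at_top. lower_boundary (\<lambda>x. D x - A x / real B) (e B)"
  shows "\<forall>\<^sub>F B in at_top. e B * real B < t"
proof -
  have "((\<lambda>x. t * (D x / x\<^sup>2) - A x / x) \<longlongrightarrow> t * d - K) (at_right 0)"
    using D A by (intro tendsto_intros)
  then have "\<forall>\<^sub>F x in at_right 0. 0 < t * (D x / x\<^sup>2) - A x / x"
    by (rule order_tendstoD(1)) (use \<open>K < t * d\<close> in linarith)
  then have "\<forall>\<^sub>F x in at_right 0. x * A x < t * D x"
    using eventually_at_right_less[of 0]
  proof eventually_elim
    case (elim x)
    then have "0 < x\<^sup>2 * (t * (D x / x\<^sup>2) - A x / x)"
      by (intro mult_pos_pos) auto
    also have "\<dots> = t * D x - x * A x"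
      using elim by (intro scaled_quotient_difference_eq) auto
    finally show ?case
      by simp
  qed
  then obtain \<delta> where "\<delta> > 0" and near: "\<And>x. 0 < x \<Longrightarrow> x < \<delta> \<Longrightarrow> x * A x < t * D x"
    unfolding eventually_at_right_field by auto
  have "\<forall>\<^sub>F B in at_top. t / real B < \<delta>"
    using \<open>\<delta> > 0\<close> by real_asymp
  with e eventually_gt_at_top[of 0] show ?thesis
  proof eventually_elim
    case (elim B)
    define y where "y = t / real B"
    have "0 < y" "y < \<delta>"
      using elim \<open>t > 0\<close> by (simp_all add: y_def)
    have "0 = y * A y - t * A y / real B"
      using elim by (simp add: y_def)
    also have "\<dots> < t * D y - t * A y / real B"
      using near[OF \<open>0 < y\<close> \<open>y < \<delta>\<close>] by simp
    also have "\<dots> = t * (D y - A y / real B)"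
      by (simp add: algebra_simps)
    finally have "0 < D y - A y / real B"
      using \<open>t > 0\<close> by (simp add: zero_less_mult_iff)
    moreover have "D x - A x / real B < 0" if "0 < x" "x < e B" for x
      using elim that by (simp add: lower_boundary_def)
    moreover have "D (e B) - A (e B) / real B = 0"
      using elim by (simp add: lower_boundary_def)
    ultimately have "\<not> y \<le> e B"
      using \<open>0 < y\<close> by (metis less_irrefl order_le_less order_less_asym)
    then have "e B < t / real B"
      by (simp add: y_def)
    then show "e B * real B < t"
      using elim by (metis of_nat_0_less_iff pos_less_divide_eq)
  qed
qed

lemma lower_boundary_asymp_equiv:
  fixes D A :: "real \<Rightarrow> real" and e :: "nat \<Rightarrow> real"
  assumes "d > 0" and "K > 0"
    and D: "((\<lambda>x. D x / x\<^sup>2) \<longlongrightarrow> d) (at_right 0)" and A: "((\<lambda>x. A x / x) \<longlongrightarrow> K) (at_right 0)"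
    and e: "\<forall>\<^sub>F B in at_top. lower_boundary (\<lambda>x. D x - A x / real B) (e B)"
  shows "e \<sim>[at_top] (\<lambda>B. K / d / real B)"
proof -
  have "((\<lambda>B. e B * real B) \<longlongrightarrow> K / d) at_top"
  proof (rule order_tendstoI)
    fix t assume "t < K / d"
    show "\<forall>\<^sub>F B in at_top. t < e B * real B"
    proof (cases "t > 0")
      case True
      with \<open>t < K / d\<close> \<open>d > 0\<close> have "t * d < K"
        by (simp add: pos_less_divide_eq)
      with True show ?thesis
        using lower_boundary_scaled_eventually_gt[OF D A \<open>K > 0\<close> _ _ e] by blast
    next
      case False
      from e eventually_gt_at_top[of 0] show ?thesis
      proof eventually_elim
        case (elim B)
        then have "0 < e B * real B"
          by (simp add: lower_boundary_def)
        with False show ?case by linarith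
      qed
    qed
  next
    fix t assume "K / d < t"
    moreover have "0 < K / d"
      using \<open>d > 0\<close> \<open>K > 0\<close> by simp
    ultimately have "0 < t"
      by linarith
    moreover have "K < t * d"
      using \<open>K / d < t\<close> \<open>d > 0\<close> by (simp add: pos_divide_less_eq)
    ultimately show "\<forall>\<^sub>F B in at_top. e B * real B < t"
      using lower_boundary_scaled_eventually_lt[OF D A _ _ e] by blast
  qed
  from tendsto_divide[OF this tendsto_const, of "K / d"]
  have "((\<lambda>B. e B * real B / (K / d)) \<longlongrightarrow> 1) at_top"
    using \<open>d > 0\<close> \<open>K > 0\<close> by simp
  then show ?thesis
    by (intro asymp_equivI') (simp only: divide_divide_eq_right)
qed

lemma lower_boundary_asymp_equiv_of_bigo:
  fixes D A :: "real \<Rightarrow> real" and e :: "nat \<Rightarrow> real"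
  assumes "d > 0" and "K > 0"
    and D: "(\<lambda>x. D x - d * x\<^sup>2) \<in> O[at_right 0](\<lambda>x. x ^ 3)"
    and A: "(\<lambda>x. A x - K * x) \<in> O[at_right 0](\<lambda>x. x\<^sup>2)"
    and e: "\<forall>\<^sub>F B in at_top. lower_boundary (\<lambda>x. D x - A x / real B) (e B)"
  shows "e \<sim>[at_top] (\<lambda>B. K / d / real B)"
proof (rule lower_boundary_asymp_equiv[OF \<open>d > 0\<close> \<open>K > 0\<close> _ _ e])
  show "((\<lambda>x. D x / x\<^sup>2) \<longlongrightarrow> d) (at_right 0)"
    using D by (intro tendsto_quotient_power_of_bigo) simp
  have "((\<lambda>x. A x / x ^ 1) \<longlongrightarrow> K) (at_right 0)"
    using A by (intro tendsto_quotient_power_of_bigo) (simp only: power_one_right one_add_one)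
  then show "((\<lambda>x. A x / x) \<longlongrightarrow> K) (at_right 0)"
    by simp
qed

theorem proposition10:
  fixes k ell :: nat and c lam pr :: "nat \<Rightarrow> real" and mu :: "real \<Rightarrow> real" and \<gamma> :: real
  assumes k: "k \<ge> 1"
    and lam0: "lam 0 = 1"
    and lam_mono: "\<And>i j. i < j \<Longrightarrow> j \<le> k \<Longrightarrow> lam i < lam j"
    and c_sum: "(\<Sum>j\<le>k. c j) = 1"
    and c_moments: "\<And>m. 1 \<le> m \<Longrightarrow> m \<le> k \<Longrightarrow> (\<Sum>j\<le>k. c j * lam j ^ m) = 0"
    and pi_pos: "\<And>j. j \<le> k \<Longrightarrow> pr j > 0"
    and pi_sum: "(\<Sum>j\<le>k. pr j) = 1"
    and \<gamma>: "\<gamma> > 0"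
    and ell: "ell > 0"
    and mu_exp: "\<And>j. j \<le> k \<Longrightarrow>
       (\<lambda>\<epsilon>. mu (lam j * \<epsilon>) - (1 - \<gamma> * lam j * \<epsilon>) ^ ell) \<in> O[at_right 0](\<lambda>\<epsilon>. \<epsilon>^2)"
  shows
    "(\<lambda>\<epsilon>. ((bias_noisy mu \<epsilon>)^2 - (bias_zne k c lam mu \<epsilon>)^2) - (\<gamma> * real ell)^2 * \<epsilon>^2)
        \<in> O[at_right 0](\<lambda>\<epsilon>. \<epsilon>^3)
     \<and> (\<lambda>\<epsilon>. single_shot_var mu \<epsilon> - 2 * (\<gamma> * real ell) * \<epsilon>) \<in> O[at_right 0](\<lambda>\<epsilon>. \<epsilon>^2)
     \<and> (\<lambda>\<epsilon>. var_excess k c lam pr mu \<epsilon>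
           - 2 * (\<gamma> * real ell) * ((\<Sum>j\<le>k. (c j)^2 * lam j / pr j) - 1) * \<epsilon>)
        \<in> O[at_right 0](\<lambda>\<epsilon>. \<epsilon>^2)
     \<and> (\<forall>\<epsilon>. \<forall>B::nat. B > 0 \<longrightarrow> delta_mse k c lam pr mu \<epsilon> (real B) =
           ((bias_noisy mu \<epsilon>)^2 - (bias_zne k c lam mu \<epsilon>)^2) - var_excess k c lam pr mu \<epsilon> / real B)
     \<and> (\<forall>e :: nat \<Rightarrow> real.
          (\<forall>\<^sub>F B in at_top. lower_boundary (\<lambda>\<epsilon>. delta_mse k c lam pr mu \<epsilon> (real B)) (e B))
          \<longrightarrow> e \<sim>[at_top] (\<lambda>B. 2 / (\<gamma> * real ell) * ((\<Sum>j\<le>k. (c j)^2 * lam j / pr j) - 1) / real B))"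
proof -
  define \<kappa> where "\<kappa> = \<gamma> * real ell"
  define S where "S = (\<Sum>j\<le>k. (c j)\<^sup>2 * lam j / pr j)"
  define D where "D \<epsilon> = (bias_noisy mu \<epsilon>)\<^sup>2 - (bias_zne k c lam mu \<epsilon>)\<^sup>2" for \<epsilon>
  have mu_lin: "(\<lambda>\<epsilon>. mu (lam j * \<epsilon>) - (1 - \<kappa> * lam j * \<epsilon>)) \<in> O[at_right 0](\<lambda>\<epsilon>. \<epsilon>\<^sup>2)"
    if "j \<le> k" for j
    using sum_in_bigo(1)[OF mu_exp[OF that] power_one_minus_linear_bigo[of "\<gamma> * lam j" ell]]
    by (simp add: \<kappa>_def algebra_simps)
  have var: "(\<lambda>\<epsilon>. single_shot_var mu (lam j * \<epsilon>) - 2 * \<kappa> * lam j * \<epsilon>) \<in> O[at_right 0](\<lambda>\<epsilon>. \<epsilon>\<^sup>2)"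
    if "j \<le> k" for j
    using one_minus_square_bigo[OF mu_lin[OF that]] by (simp add: single_shot_var_def mult.assoc)
  have c_moment: "(\<Sum>j\<le>k. c j * lam j) = 0"
    using c_moments[of 1] k by simp
  have D_exp: "(\<lambda>\<epsilon>. D \<epsilon> - \<kappa>\<^sup>2 * \<epsilon>\<^sup>2) \<in> O[at_right 0](\<lambda>\<epsilon>. \<epsilon> ^ 3)"
    unfolding D_def
  proof (rule square_difference_bigo)
    show "(\<lambda>\<epsilon>. bias_noisy mu \<epsilon> + \<kappa> * \<epsilon>) \<in> O[at_right 0](\<lambda>\<epsilon>. \<epsilon>\<^sup>2)"
      using mu_lin[of 0] lam0 by (simp add: bias_noisy_def algebra_simps)
    show "bias_zne k c lam mu \<in> O[at_right 0](\<lambda>\<epsilon>. \<epsilon>\<^sup>2)"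
      using c_sum c_moment mu_lin by (rule bias_zne_bigo)
  qed
  have A_exp: "(\<lambda>\<epsilon>. var_excess k c lam pr mu \<epsilon> - 2 * \<kappa> * (S - 1) * \<epsilon>) \<in> O[at_right 0](\<lambda>\<epsilon>. \<epsilon>\<^sup>2)"
    unfolding S_def using lam0 var by (rule var_excess_bigo)
  have "\<kappa> > 0" and "S > 1"
    using \<gamma> ell richardson_variance_factor_gt_one[OF lam0 lam_mono c_sum c_moment pi_pos pi_sum]
    by (simp_all add: \<kappa>_def S_def)
  have boundary: "e \<sim>[at_top] (\<lambda>B. 2 * \<kappa> * (S - 1) / \<kappa>\<^sup>2 / real B)"
    if "\<forall>\<^sub>F B in at_top. lower_boundary (\<lambda>\<epsilon>. D \<epsilon> - var_excess k c lam pr mu \<epsilon> / real B) (e B)"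
    for e :: "nat \<Rightarrow> real"
    using \<open>\<kappa> > 0\<close> \<open>S > 1\<close> D_exp A_exp that by (intro lower_boundary_asymp_equiv_of_bigo) simp_all
  have "2 * \<kappa> * (S - 1) / \<kappa>\<^sup>2 = 2 / \<kappa> * (S - 1)"
    using \<open>\<kappa> > 0\<close> by (simp add: power2_eq_square)
  with D_exp var[of 0] A_exp boundary show ?thesis
    unfolding \<kappa>_def S_def D_def delta_mse_eq by (simp add: lam0)
qed

end
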